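(* For every integer $q\ge 11$ there exists an $\mathcal{SOS}_q(2)$ $U^*$ with $w_q(U^* )$ coprime to $q$ and of period $\frac{(q-2)(q-4)}{2}-3$ if $q\equiv 0\pmod 4$, $\frac{(q-1)(q-5)}{2}-3$ if $q\equiv 1\pmod 4$, $\frac{(q-2)(q-6)}{2}-3$ if $q\equiv 2\pmod 4$, and $\frac{(q-1)(q-3)}{2}-3$ if $q\equiv 3\pmod 4$.
   Context: For a periodic sequence $S=(s_i)$ over $\mathbb{Z}_q$ write $\mathbf{s}_n(i)=(s_i,\ldots,s_{i+n-1})$; $\mathbf{u}^R$ denotes the reverse of a tuple and $-\mathbf{u}$ its termwise negative. An $\mathcal{SOS}_q(n)$ is a periodic sequence of period $m$ over $\mathbb{Z}_q$ such that $\mathbf{s}_n(i)=\mathbf{s}_n(j)$ implies $i\equiv j\pmod m$, and $\mathbf{s}_n(i)\neq\mathbf{s}_n(j)^R$ and $\mathbf{s}_n(i)\neq-\mathbf{s}_n(j)^R$ for all $i,j$. The weight $w(S)$ is $s_0+\cdots+s_{m-1}$ computed in the integers with each term in $\{0,\ldots,q-1\}$, and $w_q(S)=w(S)\bmod q$. *)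

theory Defs
  imports Main
begin

definition window :: "(nat \<Rightarrow> nat) \<Rightarrow> nat \<Rightarrow> nat \<Rightarrow> nat list" where
  "window s n i = map (\<lambda>k. s (i + k)) [0..<n]"

definition negq :: "nat \<Rightarrow> nat list \<Rightarrow> nat list" where
  "negq q u = map (\<lambda>x. (q - x) mod q) u"

definition is_SOS :: "nat \<Rightarrow> nat \<Rightarrow> nat \<Rightarrow> (nat \<Rightarrow> nat) \<Rightarrow> bool" where
  "is_SOS q n m s \<longleftrightarrow>
     0 < m \<and> (\<forall>i. s i < q) \<and> (\<forall>i. s (i + m) = s i) \<and>
     (\<forall>i j. window s n i = window s n j \<longrightarrow> i mod m = j mod m) \<and>
     (\<forall>i j. window s n i \<noteq> rev (window s n j)) \<and>
     (\<forall>i j. window s n i \<noteq> negq q (rev (window s n j)))"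

definition weight :: "nat \<Rightarrow> (nat \<Rightarrow> nat) \<Rightarrow> nat" where
  "weight m s = (\<Sum>i<m. s i)"

definition weight_q :: "nat \<Rightarrow> nat \<Rightarrow> (nat \<Rightarrow> nat) \<Rightarrow> nat" where
  "weight_q q m s = weight m s mod q"

definition target_period :: "nat \<Rightarrow> nat" where
  "target_period q =
     (if q mod 4 = 0 then (q - 2) * (q - 4) div 2 - 3
      else if q mod 4 = 1 then (q - 1) * (q - 5) div 2 - 3
      else if q mod 4 = 2 then (q - 2) * (q - 6) div 2 - 3
      else (q - 1) * (q - 3) div 2 - 3)"

end

theory Submission
  imports Defs
begin

text \<open>Represent Z_q by the integers in [-k, k], where k = (q - 1) div 2; as 2k < q, this
  representation is injective and commutes with negation. The windows of length 2 of a cyclic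
  word over [-k, k] are its transitions (a, b) between cyclically consecutive entries, so the word
  gives an SOS_q(2) as soon as its transitions are pairwise distinct and none of them is the
  reverse (b, a) or the negated reverse (-b, -a) of another. Both are excluded if every transition
  is oriented: entries of equal sign increase in absolute value, entries of opposite sign
  decrease, and 0 only occurs in (0, 1), (0, -1), (2, 0) and (-2, 0).

  The word is the concatenation of groups [k, -i, -k, B(i, i + 1), ..., B(i, k - 1), i] over
  1 <= i < k, with blocks B(i, j) = [i, j, -i, -j]; all their transitions are oriented. A transition
  of group i has min(|a|, |b|) = i (or contains 0), one of block B(i, j) has max(|a|, |b|) = j, and
  this is why the transitions are distinct. All groups sum to 0, except that in group 1 the blocks
  B(1, 2), B(1, 3) are merged into [1, 3, -1, -2, 0], which makes the weight 1.\<close>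

section \<open>Transitions of a word\<close>

definition transitions :: "'a \<Rightarrow> 'a list \<Rightarrow> ('a \<times> 'a) list" where
  "transitions y xs = zip xs (tl (xs @ [y]))"

lemma transitions_Nil [simp]: "transitions y [] = []"
  by (simp add: transitions_def)

lemma transitions_Cons: "transitions y (x # xs) = (x, hd (xs @ [y])) # transitions y xs"
  by (cases xs) (simp_all add: transitions_def)

lemma length_transitions [simp]: "length (transitions y xs) = length xs"
  by (simp add: transitions_def)

lemma transitions_append:
  "transitions y (xs @ ys) = transitions (hd (ys @ [y])) xs @ transitions y ys"
  by (induction xs) (auto simp: transitions_Cons hd_append)

lemma fst_set_transitions: "fst ` set (transitions y xs) = set xs"
  by (metis set_map transitions_def length_tl length_append_singleton diff_Suc_1 map_fst_zip)

lemma transitions_snoc: "transitions y (xs @ [x]) = transitions x xs @ [(x, y)]"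
  by (simp only: transitions_append) (simp add: transitions_def)

lemma transitions_concat:
  assumes "\<forall>b\<in>set bs. b \<noteq> [] \<and> hd b = x"
  shows "transitions x (concat bs) = concat (map (transitions x) bs)"
  using assms
proof (induction bs)
  case (Cons b bs)
  have "hd (concat bs @ [x]) = x"
    using Cons.prems by (cases bs) auto
  with Cons show ?case by (simp add: transitions_append)
qed simp

lemma nth_transitions_hd:
  assumes "p < length xs"
  shows "transitions (hd xs) xs ! p = (xs ! p, xs ! (Suc p mod length xs))"
proof (cases "Suc p < length xs")
  case True
  with assms show ?thesis by (simp add: transitions_def nth_append nth_tl)
next
  case False
  with assms have "p = length xs - 1" "xs \<noteq> []" by auto
  then show ?thesis by (simp add: transitions_def nth_tl nth_append hd_conv_nth)
qed

lemma distinct_concat_map_labelled: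
  assumes "distinct xs" "\<And>x. x \<in> set xs \<Longrightarrow> distinct (f x)"
    "\<And>x e. x \<in> set xs \<Longrightarrow> e \<in> set (f x) \<Longrightarrow> label e = x"
  shows "distinct (concat (map f xs))"
  using assms
proof (induction xs)
  case (Cons x xs)
  have "distinct (concat (map f xs))"
    by (rule Cons.IH) (use Cons.prems in auto)
  moreover have "e \<notin> set (f x)" if "e \<in> set (concat (map f xs))" for e
  proof -
    from that obtain y where y: "y \<in> set xs" "e \<in> set (f y)" by auto
    then have "label e = y" using Cons.prems(3) by simp
    moreover have "x \<notin> set xs" using Cons.prems(1) by simp
    ultimately show ?thesis using y Cons.prems(3)[of x e] by auto
  qed
  ultimately show ?case using Cons.prems by auto
qed simp

section \<open>Integer words as sequences over Z_q\<close>

definition residue :: "nat \<Rightarrow> int \<Rightarrow> nat" where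
  "residue q a = nat (a mod int q)"

lemma residue_less: "0 < q \<Longrightarrow> residue q a < q"
  by (simp add: residue_def nat_less_iff)

lemma residue_eq_iff:
  assumes "2 * k < int q" "\<bar>a\<bar> \<le> k" "\<bar>b\<bar> \<le> k"
  shows "residue q a = residue q b \<longleftrightarrow> a = b"
proof
  assume "residue q a = residue q b"
  then have "a mod int q = b mod int q"
    using assms by (simp add: residue_def nat_eq_iff2)
  then have "int q dvd a - b"
    by (simp add: mod_eq_dvd_iff)
  moreover have "\<bar>a - b\<bar> < int q" using assms by linarith
  ultimately show "a = b"
    using dvd_imp_le_int[of "a - b" "int q"] by fastforce
qed simp

lemma residue_uminus:
  assumes "0 < q"
  shows "(q - residue q a) mod q = residue q (- a)"
proof -
  have "int ((q - residue q a) mod q) = (int q - a mod int q) mod int q"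
    using assms residue_less[OF assms, of a] by (simp add: zmod_int residue_def)
  also have "\<dots> = (- a) mod int q"
    by (simp add: mod_minus_eq)
  finally show ?thesis
    using assms by (simp add: residue_def)
qed

definition residue_seq :: "nat \<Rightarrow> int list \<Rightarrow> nat \<Rightarrow> nat" where
  "residue_seq q xs n = residue q (xs ! (n mod length xs))"

lemma window_residue_seq:
  "window (residue_seq q xs) 2 n = [residue q (xs ! (n mod length xs)), residue q (xs ! (Suc n mod length xs))]"
  by (simp add: window_def residue_seq_def numeral_2_eq_2 mod_Suc_eq)

lemma is_SOS_residue_seq:
  fixes xs :: "int list"
  defines "T \<equiv> transitions (hd xs) xs"
  assumes "xs \<noteq> []" and "2 * k < int q" and bounded: "\<forall>x\<in>set xs. \<bar>x\<bar> \<le> k"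
    and "distinct T"
    and reversal_free: "\<And>a b. (a, b) \<in> set T \<Longrightarrow> (b, a) \<notin> set T \<and> (- b, - a) \<notin> set T"
  shows "is_SOS q 2 (length xs) (residue_seq q xs)"
proof -
  let ?m = "length xs" and ?s = "residue_seq q xs" and ?r = "residue q"
  have "0 < ?m" using \<open>xs \<noteq> []\<close> by simp
  have "0 < q" using \<open>2 * k < int q\<close> \<open>xs \<noteq> []\<close> bounded by (cases xs) auto
  define e where "e n = T ! (n mod ?m)" for n
  have e_mem: "e n \<in> set T" for n
    using \<open>0 < ?m\<close> by (simp add: e_def T_def)
  have e_nth: "e n = (xs ! (n mod ?m), xs ! (Suc n mod ?m))" for n
    using \<open>0 < ?m\<close> by (simp add: e_def T_def nth_transitions_hd mod_Suc_eq)
  have e_bounded: "\<bar>fst (e n)\<bar> \<le> k" "\<bar>snd (e n)\<bar> \<le> k" for n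
    using bounded \<open>0 < ?m\<close> by (simp_all add: e_nth)
  have window: "window ?s 2 n = [?r (fst (e n)), ?r (snd (e n))]" for n
    by (simp add: window_residue_seq e_nth)
  have r_eq: "?r a = ?r b \<longleftrightarrow> a = b" if "\<bar>a\<bar> \<le> k" "\<bar>b\<bar> \<le> k" for a b
    using residue_eq_iff[OF \<open>2 * k < int q\<close> that] .
  show ?thesis
    unfolding is_SOS_def
  proof (intro conjI allI impI)
    show "?s i < q" for i
      using \<open>0 < q\<close> by (simp add: residue_seq_def residue_less)
    show "?s (i + ?m) = ?s i" for i
      by (simp add: residue_seq_def)
    show "i mod ?m = j mod ?m" if "window ?s 2 i = window ?s 2 j" for i j
    proof -
      have "e i = e j"
        using that e_bounded by (simp add: window r_eq prod_eq_iff)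
      with \<open>distinct T\<close> \<open>0 < ?m\<close> show ?thesis
        by (simp add: e_def T_def nth_eq_iff_index_eq)
    qed
    show "window ?s 2 i \<noteq> rev (window ?s 2 j)" for i j
    proof
      assume "window ?s 2 i = rev (window ?s 2 j)"
      then have "e i = (snd (e j), fst (e j))"
        using e_bounded by (simp add: window r_eq prod_eq_iff)
      with e_mem[of i] e_mem[of j] reversal_free show False
        by (metis prod.collapse)
    qed
    show "window ?s 2 i \<noteq> negq q (rev (window ?s 2 j))" for i j
    proof
      assume "window ?s 2 i = negq q (rev (window ?s 2 j))"
      then have "e i = (- snd (e j), - fst (e j))"
        using e_bounded \<open>0 < q\<close> by (simp add: window negq_def residue_uminus r_eq prod_eq_iff)
      with e_mem[of i] e_mem[of j] reversal_free show False
        by (metis prod.collapse)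
    qed
  qed fact
qed

lemma weight_residue_seq:
  assumes "0 < q"
  shows "weight (length xs) (residue_seq q xs) mod q = nat (sum_list xs mod int q)"
proof -
  have "int (weight (length xs) (residue_seq q xs)) = (\<Sum>i<length xs. xs ! i mod int q)"
    using assms by (simp add: weight_def residue_seq_def residue_def)
  then have "int (weight (length xs) (residue_seq q xs)) mod int q = (\<Sum>i<length xs. xs ! i) mod int q"
    by (simp add: mod_sum_eq)
  also have "(\<Sum>i<length xs. xs ! i) = sum_list xs"
    by (simp add: sum_list_sum_nth atLeast0LessThan)
  finally have "int (weight (length xs) (residue_seq q xs) mod q) = sum_list xs mod int q"
    by (simp add: zmod_int)
  then show ?thesis
    by (metis nat_int)
qed

definition oriented :: "int \<Rightarrow> int \<Rightarrow> bool" where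
  "oriented a b \<longleftrightarrow> a = 0 \<and> \<bar>b\<bar> = 1 \<or> b = 0 \<and> \<bar>a\<bar> = 2 \<or>
     a \<noteq> 0 \<and> b \<noteq> 0 \<and> (if (0 < a) = (0 < b) then \<bar>a\<bar> < \<bar>b\<bar> else \<bar>b\<bar> < \<bar>a\<bar>)"

lemma oriented_not_swap: "oriented a b \<Longrightarrow> \<not> oriented b a"
  by (auto simp: oriented_def split: if_splits)

lemma oriented_not_neg_swap: "oriented a b \<Longrightarrow> \<not> oriented (- b) (- a)"
  by (auto simp: oriented_def split: if_splits)

lemma oriented_square:
  "0 < i \<Longrightarrow> i < j \<Longrightarrow> oriented i j \<and> oriented j (- i) \<and> oriented (- i) (- j) \<and> oriented (- j) i"
  by (simp add: oriented_def)

definition block :: "int \<Rightarrow> int \<Rightarrow> int list" where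
  "block i j = (if i = 1 \<and> j = 3 then [1, 3, -1, -2, 0] else [i, j, -i, -j])"

definition partners :: "int \<Rightarrow> int \<Rightarrow> int list" where
  "partners k i = (if i = 1 then [3..k - 1] else [i + 1..k - 1])"

definition group_word :: "int \<Rightarrow> int \<Rightarrow> int list" where
  "group_word k i = [k, -i, -k] @ concat (map (block i) (partners k i)) @ [i]"

text \<open>For even k the group k / 2 is left out; this is what produces the period 2k(k - 2) - 3.\<close>

definition group_indices :: "int \<Rightarrow> int list" where
  "group_indices k = (if even k then removeAll (k div 2) [1..k - 1] else [1..k - 1])"

definition sos_cycle :: "int \<Rightarrow> int list" where
  "sos_cycle k = concat (map (group_word k) (group_indices k))"

lemma set_partners: "1 \<le> i \<Longrightarrow> j \<in> set (partners k i) \<Longrightarrow> i < j \<and> 3 \<le> j \<and> j < k"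
  by (auto simp: partners_def split: if_splits)

lemma distinct_partners: "distinct (partners k i)"
  by (simp add: partners_def)

lemma set_group_indices: "i \<in> set (group_indices k) \<Longrightarrow> 1 \<le> i \<and> i < k"
  by (auto simp: group_indices_def split: if_splits)

lemma distinct_group_indices: "distinct (group_indices k)"
  by (simp add: group_indices_def distinct_removeAll)

lemma one_mem_group_indices: "3 \<le> k \<Longrightarrow> 1 \<in> set (group_indices k)"
  by (auto simp: group_indices_def)

lemma hd_sos_cycle: "3 \<le> k \<Longrightarrow> sos_cycle k \<noteq> [] \<and> hd (sos_cycle k) = k"
  using one_mem_group_indices[of k]
  by (cases "group_indices k") (auto simp: sos_cycle_def group_word_def)

lemma transitions_block:
  "transitions i (block i j) =
     (if i = 1 \<and> j = 3 then [(1, 3), (3, -1), (-1, -2), (-2, 0), (0, 1)]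
      else [(i, j), (j, -i), (-i, -j), (-j, i)])"
  by (simp add: block_def transitions_def)

lemma transitions_group_word:
  "transitions k (group_word k i) =
     [(k, -i), (-i, -k), (-k, i)] @ concat (map (\<lambda>j. transitions i (block i j)) (partners k i)) @ [(i, k)]"
proof -
  let ?blocks = "concat (map (block i) (partners k i))"
  have blocks: "\<forall>b\<in>set (map (block i) (partners k i)). b \<noteq> [] \<and> hd b = i"
    by (auto simp: block_def)
  have "hd ((?blocks @ [i]) @ [k]) = i"
    by (cases "partners k i") (auto simp: block_def)
  then have "transitions k (group_word k i) = transitions i [k, -i, -k] @ transitions k (?blocks @ [i])"
    using transitions_append[of k "[k, -i, -k]" "?blocks @ [i]"] by (simp add: group_word_def)
  also have "transitions k (?blocks @ [i]) = transitions i ?blocks @ [(i, k)]"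
    by (rule transitions_snoc)
  finally show ?thesis
    using transitions_concat[OF blocks] by (simp add: transitions_def comp_def)
qed

lemma transitions_sos_cycle:
  "transitions k (sos_cycle k) = concat (map (\<lambda>i. transitions k (group_word k i)) (group_indices k))"
  using transitions_concat[of "map (group_word k) (group_indices k)" k]
  by (simp add: sos_cycle_def group_word_def comp_def)

definition group_label :: "int \<times> int \<Rightarrow> int" where
  "group_label e = (if fst e = 0 \<or> snd e = 0 then 1 else min \<bar>fst e\<bar> \<bar>snd e\<bar>)"

definition block_label :: "int \<times> int \<Rightarrow> int" where
  "block_label e = max 3 (max \<bar>fst e\<bar> \<bar>snd e\<bar>)"

lemma mem_transitions_block:
  assumes "1 \<le> i" "j \<in> set (partners k i)" "(a, b) \<in> set (transitions i (block i j))"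
  shows "oriented a b \<and> \<bar>a\<bar> < k \<and> \<bar>b\<bar> < k \<and> group_label (a, b) = i \<and> block_label (a, b) = j"
proof -
  have "0 < i" "i < j" "3 \<le> j" "j < k" using assms(1,2) set_partners by auto
  show ?thesis
  proof (cases "i = 1 \<and> j = 3")
    case True
    with assms(3) \<open>j < k\<close> show ?thesis
      by (auto simp: transitions_block oriented_def group_label_def block_label_def)
  next
    case False
    with assms(3) have "(a, b) \<in> {(i, j), (j, -i), (-i, -j), (-j, i)}"
      by (simp add: transitions_block)
    with \<open>0 < i\<close> \<open>i < j\<close> \<open>3 \<le> j\<close> \<open>j < k\<close> show ?thesis
      using oriented_square[of i j] by (auto simp: group_label_def block_label_def)
  qed
qed

lemma distinct_transitions_block: "1 \<le> i \<Longrightarrow> j \<in> set (partners k i) \<Longrightarrow> distinct (transitions i (block i j))"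
  by (auto simp: transitions_block dest: set_partners)

lemma mem_transitions_group_word:
  assumes "i \<in> set (group_indices k)" "(a, b) \<in> set (transitions k (group_word k i))"
  shows "oriented a b \<and> \<bar>a\<bar> \<le> k \<and> \<bar>b\<bar> \<le> k \<and> group_label (a, b) = i"
proof -
  have "1 \<le> i" "i < k" using set_group_indices[OF assms(1)] by auto
  from assms(2) consider "(a, b) \<in> {(k, -i), (-i, -k), (-k, i), (i, k)}"
    | j where "j \<in> set (partners k i)" "(a, b) \<in> set (transitions i (block i j))"
    by (auto simp: transitions_group_word)
  then show ?thesis
  proof cases
    case 1
    with \<open>1 \<le> i\<close> \<open>i < k\<close> show ?thesis
      using oriented_square[of i k] by (auto simp: group_label_def)
  next
    case 2
    with \<open>1 \<le> i\<close> show ?thesis using mem_transitions_block by fastforce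
  qed
qed

lemma distinct_transitions_group_word:
  assumes "3 \<le> k" "i \<in> set (group_indices k)"
  shows "distinct (transitions k (group_word k i))"
proof -
  have "1 \<le> i" "i < k" using set_group_indices[OF assms(2)] by auto
  let ?blocks = "concat (map (\<lambda>j. transitions i (block i j)) (partners k i))"
  have "distinct ?blocks"
    using \<open>1 \<le> i\<close> mem_transitions_block distinct_transitions_block distinct_partners
    by (intro distinct_concat_map_labelled[where label = block_label]) auto
  moreover have "block_label (a, b) < k" if "(a, b) \<in> set ?blocks" for a b
  proof -
    from that obtain j where "j \<in> set (partners k i)" "(a, b) \<in> set (transitions i (block i j))"
      by auto
    with \<open>1 \<le> i\<close> show ?thesis using mem_transitions_block set_partners by fastforce
  qed
  ultimately show ?thesis
    using \<open>1 \<le> i\<close> \<open>i < k\<close> \<open>3 \<le> k\<close>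
    by (fastforce simp: transitions_group_word block_label_def)
qed

lemma mem_transitions_sos_cycle:
  assumes "(a, b) \<in> set (transitions k (sos_cycle k))"
  shows "oriented a b \<and> \<bar>a\<bar> \<le> k \<and> \<bar>b\<bar> \<le> k"
  using assms mem_transitions_group_word by (fastforce simp: transitions_sos_cycle)

lemma distinct_transitions_sos_cycle:
  assumes "3 \<le> k"
  shows "distinct (transitions k (sos_cycle k))"
  unfolding transitions_sos_cycle
  using assms distinct_group_indices distinct_transitions_group_word mem_transitions_group_word
  by (intro distinct_concat_map_labelled[where label = group_label]) auto

lemma abs_le_of_mem_sos_cycle: "x \<in> set (sos_cycle k) \<Longrightarrow> \<bar>x\<bar> \<le> k"
  using mem_transitions_sos_cycle fst_set_transitions[of k "sos_cycle k"] by fastforce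

section \<open>Length and weight of the cycle\<close>

lemma sum_list_concat: "sum_list (concat xss) = sum_list (map sum_list xss)"
  by (induction xss) auto

lemma length_block: "length (block i j) = 4 + of_bool (i = 1 \<and> j = 3)"
  by (simp add: block_def)

lemma sum_list_block: "sum_list (block i j) = of_bool (i = 1 \<and> j = 3)"
  by (simp add: block_def)

lemma length_concat_blocks:
  "distinct P \<Longrightarrow> length (concat (map (block i) P)) = 4 * length P + of_bool (i = 1 \<and> 3 \<in> set P)"
  by (induction P) (auto simp: length_block)

lemma sum_list_concat_blocks:
  "distinct P \<Longrightarrow> sum_list (concat (map (block i) P)) = of_bool (i = 1 \<and> 3 \<in> set P)"
  by (induction P) (auto simp: sum_list_block)

lemma length_group_word:
  assumes "1 \<le> i" "i < k" "4 \<le> k"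
  shows "int (length (group_word k i)) = 4 * (k - i) - 3 * of_bool (i = 1)"
  using assms
  by (simp add: group_word_def length_concat_blocks distinct_partners) (auto simp: partners_def)

lemma sum_list_group_word:
  assumes "4 \<le> k"
  shows "sum_list (group_word k i) = of_bool (i = 1)"
  using assms
  by (simp add: group_word_def sum_list_concat_blocks distinct_partners) (auto simp: partners_def)

lemma sum_const_minus_atLeastAtMost:
  fixes c n :: int
  shows "0 \<le> n \<Longrightarrow> 2 * (\<Sum>i\<in>{1..n}. c - i) = n * (2 * c - n - 1)"
proof (induction n rule: int_ge_induct)
  case (step n)
  have "{1..n + 1} = insert (n + 1) {1..n}" using step.hyps by auto
  with step show ?case by (simp add: algebra_simps)
qed simp

lemma sum_group_indices:
  assumes "2 \<le> k"
  shows "(\<Sum>i\<in>set (group_indices k). 4 * (k - i)) = 2 * k * (if even k then k - 2 else k - 1)"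
proof -
  have "(\<Sum>i\<in>{1..k - 1}. 4 * (k - i)) = 2 * (2 * (\<Sum>i\<in>{1..k - 1}. k - i))"
    by (simp add: sum_distrib_left)
  also have "\<dots> = 2 * ((k - 1) * (2 * k - (k - 1) - 1))"
    using sum_const_minus_atLeastAtMost[of "k - 1" k] assms by simp
  finally have all: "(\<Sum>i\<in>{1..k - 1}. 4 * (k - i)) = 2 * k * (k - 1)"
    by (simp add: algebra_simps)
  show ?thesis
  proof (cases "even k")
    case True
    then obtain m where "k = 2 * m" by blast
    have "k div 2 \<in> {1..k - 1}" using True assms by auto
    with True all have "(\<Sum>i\<in>set (group_indices k). 4 * (k - i)) = 2 * k * (k - 1) - 4 * (k - k div 2)"
      by (simp add: group_indices_def sum_diff1)
    also have "\<dots> = 2 * k * (k - 2)"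
      using \<open>k = 2 * m\<close> by (simp add: algebra_simps)
    finally show ?thesis using True by simp
  next
    case False
    with all show ?thesis by (simp add: group_indices_def)
  qed
qed

lemma length_sos_cycle:
  assumes "5 \<le> k"
  shows "int (length (sos_cycle k)) + 3 = 2 * k * (if even k then k - 2 else k - 1)"
proof -
  have "int (length (sos_cycle k)) = (\<Sum>i\<in>set (group_indices k). int (length (group_word k i)))"
    by (simp add: sos_cycle_def length_concat sum_list_distinct_conv_sum_set distinct_group_indices)
  also have "\<dots> = (\<Sum>i\<in>set (group_indices k). 4 * (k - i) - 3 * of_bool (i = 1))"
    using assms by (intro sum.cong) (auto simp: length_group_word dest: set_group_indices)
  also have "\<dots> = (\<Sum>i\<in>set (group_indices k). 4 * (k - i)) - 3"
    using assms one_mem_group_indices[of k] by (simp add: sum_subtractf)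
  finally show ?thesis
    using assms sum_group_indices[of k] by simp
qed

lemma sum_list_sos_cycle:
  assumes "5 \<le> k"
  shows "sum_list (sos_cycle k) = 1"
proof -
  have "sum_list (sos_cycle k) = (\<Sum>i\<in>set (group_indices k). sum_list (group_word k i))"
    by (simp add: sos_cycle_def sum_list_concat sum_list_distinct_conv_sum_set distinct_group_indices)
  also have "\<dots> = (\<Sum>i\<in>set (group_indices k). of_bool (i = 1))"
    using assms by (simp add: sum_list_group_word)
  finally show ?thesis
    using assms one_mem_group_indices[of k] by simp
qed

lemma target_period_eq:
  fixes q :: nat
  assumes "11 \<le> q"
  defines "m \<equiv> (q - 1) div 2"
  shows "target_period q + 3 = 2 * m * (if even m then m - 2 else m - 1)"
proof -
  let ?c = "if even m then m - 2 else m - 1"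
  have "5 \<le> m" using assms by simp
  have "q = 2 * m + 1 \<or> q = 2 * m + 2" using assms(1) unfolding m_def by presburger
  then consider "q = 2 * m + 2" "odd m" | "q = 2 * m + 1" "even m"
    | "q = 2 * m + 2" "even m" | "q = 2 * m + 1" "odd m" by blast
  then have "target_period q = 2 * m * ?c - 3"
  proof cases
    case 1
    then have "q mod 4 = 0" by presburger
    with 1 show ?thesis by (simp add: target_period_def right_diff_distrib' mult.left_commute)
  next
    case 2
    then have "q mod 4 = 1" by presburger
    with 2 show ?thesis by (simp add: target_period_def right_diff_distrib' mult.left_commute)
  next
    case 3
    then have "q mod 4 = 2" by presburger
    with 3 show ?thesis by (simp add: target_period_def right_diff_distrib' mult.left_commute)
  next
    case 4
    then have "q mod 4 = 3" by presburger
    with 4 show ?thesis by (simp add: target_period_def right_diff_distrib' mult.left_commute)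
  qed
  moreover have "2 * m \<le> 2 * m * ?c" using \<open>5 \<le> m\<close> by auto
  ultimately show ?thesis using \<open>5 \<le> m\<close> by linarith
qed

theorem corollary3p25:
  fixes q :: nat
  assumes "q \<ge> 11"
  shows "\<exists>s. is_SOS q 2 (target_period q) s \<and>
             coprime (weight_q q (target_period q) s) q"
proof -
  define m where "m = (q - 1) div 2"
  define k where "k = int m"
  have "5 \<le> k" "2 * k < int q" using assms by (simp_all add: k_def m_def)
  let ?xs = "sos_cycle k"
  have xs: "?xs \<noteq> []" "hd ?xs = k" using hd_sos_cycle \<open>5 \<le> k\<close> by simp_all
  have "is_SOS q 2 (length ?xs) (residue_seq q ?xs)"
  proof (rule is_SOS_residue_seq)
    show "\<forall>x\<in>set ?xs. \<bar>x\<bar> \<le> k"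
      using abs_le_of_mem_sos_cycle by blast
    show "distinct (transitions (hd ?xs) ?xs)"
      using distinct_transitions_sos_cycle \<open>5 \<le> k\<close> xs by simp
    show "(b, a) \<notin> set (transitions (hd ?xs) ?xs) \<and> (- b, - a) \<notin> set (transitions (hd ?xs) ?xs)"
      if "(a, b) \<in> set (transitions (hd ?xs) ?xs)" for a b
      using that mem_transitions_sos_cycle oriented_not_swap oriented_not_neg_swap
      unfolding xs(2) by blast
  qed fact+
  moreover have "int (length ?xs) + 3 = int (target_period q + 3)"
    unfolding length_sos_cycle[OF \<open>5 \<le> k\<close>] target_period_eq[OF assms, folded m_def]
    using \<open>5 \<le> k\<close> by (auto simp: k_def of_nat_diff)
  then have "length ?xs = target_period q" by simp
  moreover have "weight_q q (length ?xs) (residue_seq q ?xs) = 1"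
    using weight_residue_seq[of q ?xs] sum_list_sos_cycle[OF \<open>5 \<le> k\<close>] assms
    by (simp add: weight_q_def)
  ultimately show ?thesis by (metis coprime_1_left)
qed

end
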